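(* Let $N\ge 1$ be an integer and $\sigma>0$. Define $$Z_2(\sigma)=\frac{C_{N,2}(\sigma)}{(2\pi)^N N!}\int_{\mathbb{R}_+^N}\prod_{i=1}^N \exp\!\Big(-\frac{\log^2(u_i)}{2\sigma^2}\Big)\,|\Delta(u)|^{2}\prod_{i=1}^N du_i,\qquad C_{N,2}(\sigma)=\frac{\omega_2(N)(2\pi)^N}{2^{N^2}}\exp\!\Big(-N^3\frac{\sigma^2}{2}\Big).$$ Then $$Z_2(\sigma)=\frac{\omega_2(N)}{2^{N^2}}\,(2\pi\sigma^2)^{N/2}\exp\!\Big((N^3-N)\frac{\sigma^2}{6}\Big)\prod_{k=1}^{N-1}\big(1-e^{-k\sigma^2}\big)^{N-k}.$$ Equivalently, $$\int_{\mathbb{R}_+^N}\prod_{i=1}^N e^{-\log^2(u_i)/(2\sigma^2)}\,\Delta(u)^2\prod_i du_i = N!\,(2\pi\sigma^2)^{N/2}\exp\!\Big(\frac{N^3\sigma^2}{2}+\frac{(N^3-N)\sigma^2}{6}\Big)\prod_{k=1}^{N-1}(1-e^{-k\sigma^2})^{N-k}.$$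
   Context: $\Delta(u)=\prod_{i<j}(u_i-u_j)$ is the Vandermonde determinant of $u=(u_1,\dots,u_N)$, and $\mathbb{R}_+=(0,\infty)$. $\omega_2(N)>0$ is a constant depending only on $N$ (a normalization constant of the Riemannian volume), which appears as the same factor on both sides. $Z_2(\sigma)$ so defined is the partition function $\int \exp(-d(x,\bar x)^2/(2\sigma^2))\,d\mathrm{vol}(x)$ of the Riemannian Gaussian distribution on the space $\mathcal{P}_{\mathbb{C}}(N)\cong \mathrm{GL}(N,\mathbb{C})/\mathrm{U}(N)$ of Hermitian positive definite $N\times N$ matrices. *)

theory Defs
  imports "HOL-Analysis.Analysis" "HOL-Probability.Probability"
begin

definition vandermonde :: "nat \<Rightarrow> (nat \<Rightarrow> real) \<Rightarrow> real" where
  "vandermonde N u = (\<Prod>i<N. \<Prod>j\<in>{i<..<N}. (u i - u j))"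

definition pos_orthant :: "nat \<Rightarrow> (nat \<Rightarrow> real) set" where
  "pos_orthant N = {u \<in> space (PiM {..<N} (\<lambda>_. lborel)). \<forall>i<N. 0 < u i}"

definition C_N2 :: "real \<Rightarrow> nat \<Rightarrow> real \<Rightarrow> real" where
  "C_N2 \<omega> N \<sigma> = \<omega> * (2 * pi) ^ N / 2 ^ (N^2) * exp (- (real N ^ 3) * \<sigma>^2 / 2)"

text \<open>Partition function Z_2(sigma); \<omega> stands for the normalisation constant omega_2(N).\<close>
definition Z2 :: "real \<Rightarrow> nat \<Rightarrow> real \<Rightarrow> real" where
  "Z2 \<omega> N \<sigma> = C_N2 \<omega> N \<sigma> / ((2 * pi) ^ N * fact N) *
     set_lebesgue_integral (PiM {..<N} (\<lambda>_. lborel)) (pos_orthant N)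
       (\<lambda>u. (\<Prod>i<N. exp (- ((ln (u i)) ^ 2) / (2 * \<sigma> ^ 2))) * (abs (vandermonde N u)) ^ 2)"

end

theory Submission
  imports Defs "Jordan_Normal_Form.Determinant"
begin

(* Expanding the squared Vandermonde determinant as a double sum over permutations and
   integrating term by term reduces the integral to N! times the Hankel determinant
   det (m (i + j)) of the moments of the weight (Heine's formula). For the log-normal weight
   the moments m k = sqrt (2 pi sigma^2) exp ((k + 1)^2 sigma^2 / 2) are Gaussian integrals after
   u = exp t, and the Hankel matrix factors as diagonal * Vandermonde (q^i) * diagonal with
   q = exp sigma^2. The q-Vandermonde product prod (q^j - q^i) then gives the powers of
   1 - exp (- k sigma^2). *)

section \<open>Vandermonde determinants\<close>

definition vandermonde_mat :: "nat \<Rightarrow> (nat \<Rightarrow> 'a::comm_ring_1) \<Rightarrow> 'a mat" where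
  "vandermonde_mat n x = mat n n (\<lambda>(i, j). x i ^ j)"

lemma det_upper_triangular_mat:
  assumes "\<And>i j. j < i \<Longrightarrow> i < n \<Longrightarrow> f (i, j) = (0 :: 'a::comm_ring_1)"
  shows "det (mat n n f) = (\<Prod>i<n. f (i, i))"
proof -
  have "upper_triangular (mat n n f)"
    using assms by (auto simp: upper_triangular_def)
  from det_upper_triangular[OF this mat_carrier] show ?thesis
    by (simp add: prod_list_diag_prod atLeast0LessThan)
qed

lemma det_vandermonde_mat_Suc:
  fixes x :: "nat \<Rightarrow> 'a::comm_ring_1"
  shows "det (vandermonde_mat (Suc n) x) =
    (\<Prod>i<n. (x (Suc i) - x 0)) * det (vandermonde_mat n (\<lambda>i. x (Suc i)))"
proof -
  \<comment> \<open>right multiplication by U subtracts x 0 times column j - 1 from column j\<close>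
  define U :: "'a mat" where
    "U = mat (Suc n) (Suc n) (\<lambda>(i, j). (if i = j then 1 else 0) - (if Suc i = j then x 0 else 0))"
  define D :: "'a mat" where "D = mat n n (\<lambda>(i, j). if i = j then x (Suc i) - x 0 else 0)"
  define W where "W = vandermonde_mat n (\<lambda>i. x (Suc i))"
  define B where "B = vandermonde_mat (Suc n) x * U"
  have U: "U \<in> carrier_mat (Suc n) (Suc n)" and V: "vandermonde_mat (Suc n) x \<in> carrier_mat (Suc n) (Suc n)"
    by (simp_all add: U_def vandermonde_mat_def)
  then have B: "B \<in> carrier_mat (Suc n) (Suc n)"
    by (simp add: B_def)
  have det_U: "det U = 1"
    unfolding U_def by (subst det_upper_triangular_mat) auto
  have B_entry: "B $$ (i, j) = (if j = 0 then 1 else (x i - x 0) * x i ^ (j - 1))"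
    if "i < Suc n" "j < Suc n" for i j
  proof -
    have "B $$ (i, j) = (\<Sum>k<Suc n. x i ^ k * (if k = j then 1 else 0)) -
        (\<Sum>k<Suc n. x i ^ k * (if Suc k = j then x 0 else 0))"
      using that by (simp add: B_def vandermonde_mat_def U_def scalar_prod_def atLeast0LessThan
          sum_subtractf[symmetric] right_diff_distrib)
    also have "\<dots> = (if j = 0 then 1 else (x i - x 0) * x i ^ (j - 1))"
      using that by (cases j) (auto simp: if_distrib sum.delta' algebra_simps cong: if_cong)
    finally show ?thesis .
  qed
  have "det (vandermonde_mat (Suc n) x) = det B"
    using det_mult[OF V U] det_U by (simp add: B_def)
  also have "\<dots> = (\<Sum>j<Suc n. B $$ (0, j) * cofactor B 0 j)"
    using laplace_expansion_row[OF B, of 0] by simp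
  also have "\<dots> = det (mat_delete B 0 0)"
    by (simp add: sum.lessThan_Suc_shift B_entry cofactor_def del: sum.lessThan_Suc)
  also have "mat_delete B 0 0 = D * W"
  proof (rule eq_matI)
    fix i j assume "i < dim_row (D * W)" "j < dim_col (D * W)"
    then have ij: "i < n" "j < n"
      by (simp_all add: D_def W_def vandermonde_mat_def)
    have "(D * W) $$ (i, j) = (\<Sum>k<n. (if i = k then x (Suc i) - x 0 else 0) * x (Suc k) ^ j)"
      using ij by (simp add: D_def W_def vandermonde_mat_def scalar_prod_def atLeast0LessThan)
    also have "\<dots> = (x (Suc i) - x 0) * x (Suc i) ^ j"
      using ij by (simp add: if_distrib[where f = "\<lambda>a. a * b" for b] cong: if_cong)
    finally show "mat_delete B 0 0 $$ (i, j) = (D * W) $$ (i, j)"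
      using ij B by (simp add: mat_delete_def B_entry)
  qed (use B in \<open>simp_all add: D_def W_def vandermonde_mat_def\<close>)
  also have "det (D * W) = det D * det W"
    by (rule det_mult) (auto simp: D_def W_def vandermonde_mat_def)
  also have "det D = (\<Prod>i<n. (x (Suc i) - x 0))"
    unfolding D_def by (subst det_upper_triangular_mat) auto
  finally show ?thesis
    by (simp add: W_def)
qed

lemma prod_pairs_lessThan_Suc_shift:
  fixes x :: "nat \<Rightarrow> 'a::comm_ring_1"
  shows "(\<Prod>i<Suc n. \<Prod>j\<in>{i<..<Suc n}. (x j - x i)) =
    (\<Prod>i<n. (x (Suc i) - x 0)) * (\<Prod>i<n. \<Prod>j\<in>{i<..<n}. (x (Suc j) - x (Suc i)))"
proof -
  have shift: "(\<Prod>j\<in>{i<..<Suc m}. f j) = (\<Prod>j\<in>{i..<m}. f (Suc j))" for i m and f :: "nat \<Rightarrow> 'a"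
  proof -
    have "{i<..<Suc m} = {Suc i..<Suc m}"
      by auto
    then show ?thesis
      by (simp only: prod.shift_bounds_Suc_ivl)
  qed
  have "{Suc i..<m} = {i<..<m}" for i m :: nat
    by auto
  then show ?thesis
    by (simp add: prod.lessThan_Suc_shift shift atLeast0LessThan del: prod.lessThan_Suc)
qed

theorem det_vandermonde_mat:
  fixes x :: "nat \<Rightarrow> 'a::comm_ring_1"
  shows "det (vandermonde_mat n x) = (\<Prod>i<n. \<Prod>j\<in>{i<..<n}. (x j - x i))"
proof (induction n arbitrary: x)
  case 0
  then show ?case by (simp add: vandermonde_mat_def)
next
  case (Suc n)
  then show ?case
    by (simp only: det_vandermonde_mat_Suc Suc.IH prod_pairs_lessThan_Suc_shift)
qed

lemma sum_permutes_sign_vandermonde: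
  fixes x :: "nat \<Rightarrow> 'a::comm_ring_1"
  shows "(\<Sum>p | p permutes {..<n}. of_int (sign p) * (\<Prod>i<n. x i ^ p i)) =
    (\<Prod>i<n. \<Prod>j\<in>{i<..<n}. (x j - x i))"
proof -
  have "det (vandermonde_mat n x) = (\<Sum>p | p permutes {..<n}. of_int (sign p) * (\<Prod>i<n. x i ^ p i))"
    by (subst det_def'[of _ n]) (auto simp: vandermonde_mat_def atLeast0LessThan permutes_in_image
        intro!: sum.cong prod.cong)
  then show ?thesis
    by (simp add: det_vandermonde_mat)
qed

lemma sum_permutes_sign_scaled_vandermonde:
  fixes x a b :: "nat \<Rightarrow> 'a::comm_ring_1"
  shows "(\<Sum>p | p permutes {..<n}. of_int (sign p) * (\<Prod>i<n. a i * b (p i) * x i ^ p i)) =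
    (\<Prod>i<n. a i) * (\<Prod>i<n. b i) * (\<Prod>i<n. \<Prod>j\<in>{i<..<n}. (x j - x i))"
proof -
  have "(\<Prod>i<n. a i * b (p i) * x i ^ p i) = (\<Prod>i<n. a i) * (\<Prod>i<n. b i) * (\<Prod>i<n. x i ^ p i)"
    if "p permutes {..<n}" for p
    using prod.permute[OF that, of b] by (simp add: prod.distrib comp_def)
  then have "(\<Sum>p | p permutes {..<n}. of_int (sign p) * (\<Prod>i<n. a i * b (p i) * x i ^ p i)) =
      (\<Sum>p | p permutes {..<n}. (\<Prod>i<n. a i) * (\<Prod>i<n. b i) * (of_int (sign p) * (\<Prod>i<n. x i ^ p i)))"
    by (intro sum.cong) (simp_all add: ac_simps)
  then show ?thesis
    by (simp add: sum_distrib_left[symmetric] sum_permutes_sign_vandermonde)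
qed

lemma vandermonde_sq_eq_sum_permutes:
  "vandermonde n u ^ 2 = (\<Sum>p | p permutes {..<n}. \<Sum>q | q permutes {..<n}.
      of_int (sign p * sign q) * (\<Prod>i<n. u i ^ (p i + q i)))"
proof -
  have "vandermonde n u ^ 2 = (\<Prod>i<n. \<Prod>j\<in>{i<..<n}. (u j - u i)) ^ 2"
    by (simp add: vandermonde_def prod_power_distrib power2_commute)
  also have "\<dots> = (\<Sum>p | p permutes {..<n}. of_int (sign p) * (\<Prod>i<n. u i ^ p i)) *
      (\<Sum>q | q permutes {..<n}. of_int (sign q) * (\<Prod>i<n. u i ^ q i))"
    by (simp add: sum_permutes_sign_vandermonde power2_eq_square)
  also have "\<dots> = (\<Sum>p | p permutes {..<n}. \<Sum>q | q permutes {..<n}.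
      of_int (sign p * sign q) * (\<Prod>i<n. u i ^ (p i + q i)))"
    by (simp add: sum_product power_add prod.distrib ac_simps)
  finally show ?thesis .
qed

lemma sum_permutes_sign_pair:
  fixes f :: "nat \<Rightarrow> 'a::comm_ring_1"
  shows "(\<Sum>p | p permutes {..<n}. \<Sum>q | q permutes {..<n}.
      of_int (sign p * sign q) * (\<Prod>i<n. f (p i + q i))) =
    of_nat (fact n) * (\<Sum>r | r permutes {..<n}. of_int (sign r) * (\<Prod>i<n. f (i + r i)))"
proof -
  let ?H = "\<Sum>r | r permutes {..<n}. of_int (sign r) * (\<Prod>i<n. f (i + r i))"
  \<comment> \<open>substituting q = r \<circ> p makes the inner sum independent of p\<close>
  have inner: "(\<Sum>q | q permutes {..<n}. of_int (sign p * sign q) * (\<Prod>i<n. f (p i + q i))) = ?H"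
    if p: "p permutes {..<n}" for p
  proof -
    have "(\<Prod>i<n. f (p i + r (p i))) = (\<Prod>i<n. f (i + r i))" for r
      using prod.permute[OF p, of "\<lambda>i. f (i + r i)"] by (simp add: comp_def)
    moreover have "sign p * sign (r \<circ> p) = sign r" if "r permutes {..<n}" for r
      using permutes_imp_permutation[OF finite_lessThan p] permutes_imp_permutation[OF finite_lessThan that]
      by (simp add: sign_compose mult.left_commute)
    ultimately show ?thesis
      by (subst sum_permutations_compose_right[OF p]) simp
  qed
  have "card {p. p permutes {..<n}} = fact n"
    using card_permutations[of "{..<n}" n] by simp
  moreover have "(\<Sum>p | p permutes {..<n}. \<Sum>q | q permutes {..<n}.
      of_int (sign p * sign q) * (\<Prod>i<n. f (p i + q i))) = (\<Sum>p | p permutes {..<n}. ?H)"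
    by (intro sum.cong refl inner) simp
  ultimately show ?thesis
    by simp
qed

section \<open>Products over pairs and the q-Vandermonde product\<close>

lemma prod_pairs_lessThan_Suc:
  "(\<Prod>i<Suc n. \<Prod>j\<in>{i<..<Suc n}. g i j) = (\<Prod>i<n. \<Prod>j\<in>{i<..<n}. g i j) * (\<Prod>i<n. g i n)"
proof -
  have empty: "{n<..<Suc n} = {}"
    by auto
  have "{i<..<Suc n} = insert n {i<..<n}" if "i < n" for i
    using that by auto
  then have "(\<Prod>i<n. \<Prod>j\<in>{i<..<Suc n}. g i j) = (\<Prod>i<n. g i n * (\<Prod>j\<in>{i<..<n}. g i j))"
    by (intro prod.cong) simp_all
  then show ?thesis
    by (simp add: empty prod.distrib mult.commute)
qed

lemma prod_pairs_power_diff: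
  fixes q :: "'a::field"
  assumes "q \<noteq> 0"
  shows "(\<Prod>i<n. \<Prod>j\<in>{i<..<n}. (q ^ j - q ^ i)) =
    q ^ (\<Sum>j<n. j ^ 2) * (\<Prod>k\<in>{1..<n}. (1 - inverse q ^ k) ^ (n - k))"
proof (induction n)
  case 0
  then show ?case by simp
next
  case (Suc n)
  define a where "a k = 1 - inverse q ^ k" for k
  have "(\<Prod>i<n. (q ^ n - q ^ i)) = (\<Prod>i<n. q ^ n * a (n - i))"
  proof (intro prod.cong refl)
    fix i assume "i \<in> {..<n}"
    then have "q ^ n * inverse q ^ (n - i) = q ^ i"
      using assms by (simp add: power_diff field_simps power_inverse)
    then show "q ^ n - q ^ i = q ^ n * a (n - i)"
      by (simp add: a_def right_diff_distrib)
  qed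
  also have "\<dots> = q ^ (n ^ 2) * (\<Prod>k\<in>{1..n}. a k)"
  proof -
    have "(\<Prod>i<n. a (n - i)) = (\<Prod>k\<in>{1..n}. a k)"
      by (rule prod.reindex_bij_witness[where i = "\<lambda>k. n - k" and j = "\<lambda>i. n - i"]) auto
    then show ?thesis
      by (simp add: prod.distrib power_mult[symmetric] power2_eq_square)
  qed
  finally have last: "(\<Prod>i<n. (q ^ n - q ^ i)) = q ^ (n ^ 2) * (\<Prod>k\<in>{1..n}. a k)" .
  have shift: "(\<Prod>k\<in>{1..<Suc n}. a k ^ (Suc n - k)) = (\<Prod>k\<in>{1..n}. a k) * (\<Prod>k\<in>{1..<n}. a k ^ (n - k))"
  proof -
    have "(\<Prod>k\<in>{1..<Suc n}. a k ^ (Suc n - k)) = (\<Prod>k\<in>{1..n}. a k * a k ^ (n - k))"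
      by (intro prod.cong) (auto simp: Suc_diff_le)
    also have "(\<Prod>k\<in>{1..n}. a k ^ (n - k)) = (\<Prod>k\<in>{1..<n}. a k ^ (n - k))"
      by (cases n) (simp_all add: atLeastLessThanSuc_atLeastAtMost[symmetric])
    ultimately show ?thesis
      by (simp add: prod.distrib)
  qed
  show ?case
    unfolding prod_pairs_lessThan_Suc Suc.IH last
    unfolding a_def[symmetric] shift
    by (simp add: power_add ac_simps)
qed

section \<open>Log-normal moments and the Vandermonde integral\<close>

lemma has_bochner_integral_gaussian_exp:
  fixes \<sigma> a :: real
  assumes "\<sigma> > 0"
  shows "has_bochner_integral lborel (\<lambda>t. exp (- (t ^ 2) / (2 * \<sigma> ^ 2)) * exp (a * t))
    (sqrt (2 * pi * \<sigma> ^ 2) * exp (a ^ 2 * \<sigma> ^ 2 / 2))"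
proof -
  define c where "c = sqrt (2 * pi * \<sigma> ^ 2) * exp (a ^ 2 * \<sigma> ^ 2 / 2)"
  \<comment> \<open>by completing the square, the integrand is a multiple of the normal density with mean a \<sigma>^2\<close>
  have "exp (- (t ^ 2) / (2 * \<sigma> ^ 2)) * exp (a * t) = c * normal_density (a * \<sigma> ^ 2) \<sigma> t" for t
  proof -
    have "- (t ^ 2) / (2 * \<sigma> ^ 2) + a * t = a ^ 2 * \<sigma> ^ 2 / 2 + - ((t - a * \<sigma> ^ 2) ^ 2) / (2 * \<sigma> ^ 2)"
      using assms by (simp add: field_simps power2_eq_square)
    then show ?thesis
      using assms by (simp add: c_def normal_density_def exp_add[symmetric])
  qed
  moreover have "has_bochner_integral lborel (\<lambda>t. c * normal_density (a * \<sigma> ^ 2) \<sigma> t) (c * 1)"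
    using integral_normal_density[of \<sigma> "a * \<sigma> ^ 2"] integrable_normal_density[of \<sigma> "a * \<sigma> ^ 2"] assms
    by (intro has_bochner_integral_mult_right) (simp add: has_bochner_integral_iff)
  ultimately show ?thesis
    by (simp add: c_def)
qed

lemma has_bochner_integral_lognormal_moment:
  fixes \<sigma> :: real
  assumes "\<sigma> > 0"
  shows "has_bochner_integral lborel (\<lambda>t. indicator {0<..} t * exp (- (ln t ^ 2) / (2 * \<sigma> ^ 2)) * t ^ k)
    (sqrt (2 * pi * \<sigma> ^ 2) * exp ((real k + 1) ^ 2 * \<sigma> ^ 2 / 2))"
proof -
  define f where "f u = exp (- (ln u ^ 2) / (2 * \<sigma> ^ 2)) * u ^ k" for u :: real
  define V where "V = sqrt (2 * pi * \<sigma> ^ 2) * exp ((real k + 1) ^ 2 * \<sigma> ^ 2 / 2)"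
  \<comment> \<open>substituting u = exp t gives a Gaussian integral\<close>
  have "\<bar>exp t\<bar> * f (exp t) = exp (- (t ^ 2) / (2 * \<sigma> ^ 2)) * exp ((real k + 1) * t)" for t
    by (simp add: f_def exp_of_nat_mult[symmetric] exp_add[symmetric] algebra_simps)
  with has_bochner_integral_gaussian_exp[OF assms, of "real k + 1", folded V_def]
  have G: "has_bochner_integral lborel (\<lambda>t. \<bar>exp t\<bar> * f (exp t)) V"
    by simp
  have gauss: "((\<lambda>t. \<bar>exp t\<bar> * f (exp t)) has_integral V) UNIV"
    using has_integral_integral_lborel[OF integrable.intros[OF G]]
    unfolding has_bochner_integral_integral_eq[OF G] .
  moreover have "(\<lambda>t. \<bar>exp t\<bar> * f (exp t)) absolutely_integrable_on UNIV"
    using gauss by (subst absolutely_integrable_on_iff_nonneg) (auto simp: f_def)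
  moreover have "exp ` UNIV = {0::real<..}"
    by (auto simp: image_iff) (metis exp_ln)
  ultimately have "f absolutely_integrable_on {0<..} \<and> integral {0<..} f = V"
    using has_absolute_integral_change_of_variables_1'[of UNIV exp exp f V]
    by (auto intro: DERIV_exp simp: inj_on_def)
  then have "(f has_integral V) {0<..}"
    by (metis absolutely_integrable_on_def has_integral_integral set_lebesgue_integral_eq_integral(1))
  then have "integral\<^sup>N lborel (\<lambda>t. indicator {0<..} t * f t) = V"
    by (rule nn_integral_has_integral_lebesgue[rotated]) (simp add: f_def)
  then have "has_bochner_integral lborel (\<lambda>t. indicator {0<..} t * f t) V"
    by (intro has_bochner_integral_nn_integral) (auto simp: f_def V_def indicator_def)
  then show ?thesis
    by (simp add: f_def V_def mult.assoc)
qed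

lemma has_bochner_integral_PiM_lborel_prod:
  fixes f :: "'i \<Rightarrow> real \<Rightarrow> real"
  assumes "finite I" and "\<And>i. i \<in> I \<Longrightarrow> has_bochner_integral lborel (f i) (c i)"
  shows "has_bochner_integral (PiM I (\<lambda>_. lborel)) (\<lambda>x. \<Prod>i\<in>I. f i (x i)) (\<Prod>i\<in>I. c i)"
proof -
  interpret product_sigma_finite "\<lambda>_::'i. lborel :: real measure"
    by (simp add: product_sigma_finite_def sigma_finite_lborel)
  have "integrable lborel (f i)" "integral\<^sup>L lborel (f i) = c i" if "i \<in> I" for i
    using assms(2)[OF that] by (simp_all add: has_bochner_integral_iff)
  then show ?thesis
    using assms(1) by (simp add: has_bochner_integral_iff product_integrable_prod product_integral_prod)
qed

theorem has_bochner_integral_prod_weight_vandermonde_sq: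
  fixes w :: "real \<Rightarrow> real" and m :: "nat \<Rightarrow> real"
  assumes moments: "\<And>k. has_bochner_integral lborel (\<lambda>t. w t * t ^ k) (m k)"
  shows "has_bochner_integral (PiM {..<n} (\<lambda>_. lborel)) (\<lambda>u. (\<Prod>i<n. w (u i)) * vandermonde n u ^ 2)
    (fact n * (\<Sum>r | r permutes {..<n}. of_int (sign r) * (\<Prod>i<n. m (i + r i))))"
proof -
  let ?P = "{p. p permutes {..<n}}"
  have expand: "(\<Prod>i<n. w (u i)) * vandermonde n u ^ 2 =
      (\<Sum>p\<in>?P. \<Sum>q\<in>?P. of_int (sign p * sign q) * (\<Prod>i<n. w (u i) * u i ^ (p i + q i)))" for u
    by (simp add: vandermonde_sq_eq_sum_permutes sum_distrib_left prod.distrib ac_simps)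
  have "has_bochner_integral (PiM {..<n} (\<lambda>_. lborel)) (\<lambda>u. \<Prod>i<n. w (u i) * u i ^ (p i + q i))
      (\<Prod>i<n. m (p i + q i))" for p q
    by (rule has_bochner_integral_PiM_lborel_prod) (simp_all add: moments)
  then have "has_bochner_integral (PiM {..<n} (\<lambda>_. lborel)) (\<lambda>u. (\<Prod>i<n. w (u i)) * vandermonde n u ^ 2)
      (\<Sum>p\<in>?P. \<Sum>q\<in>?P. of_int (sign p * sign q) * (\<Prod>i<n. m (p i + q i)))"
    unfolding expand by (intro has_bochner_integral_sum has_bochner_integral_mult_right)
  then show ?thesis
    by (simp only: sum_permutes_sign_pair of_nat_fact)
qed

lemma sum_permutes_sign_lognormal_moments:
  fixes c s :: real
  shows "(\<Sum>r | r permutes {..<n}. of_int (sign r) * (\<Prod>i<n. c * exp ((real (i + r i) + 1) ^ 2 * s / 2))) =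
    c ^ n * exp (s * (\<Sum>k<n. (real k + 1) ^ 2 - 1 / 2)) * (\<Prod>i<n. \<Prod>j\<in>{i<..<n}. (exp s ^ j - exp s ^ i))"
proof -
  define \<alpha> where "\<alpha> k = exp (s * ((real k + 1) ^ 2 - 1 / 2) / 2)" for k
  have factor: "c * exp ((real (i + j) + 1) ^ 2 * s / 2) = (c * \<alpha> i) * \<alpha> j * (exp s ^ i) ^ j" for i j
  proof -
    have exponent: "(real (i + j) + 1) ^ 2 * s / 2 =
        s * ((real i + 1) ^ 2 - 1 / 2) / 2 + s * ((real j + 1) ^ 2 - 1 / 2) / 2 + real (i * j) * s"
      by (simp add: power2_eq_square field_simps)
    show ?thesis
      unfolding exponent exp_add exp_of_nat_mult by (simp add: \<alpha>_def power_mult)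
  qed
  have "(\<Sum>r | r permutes {..<n}. of_int (sign r) * (\<Prod>i<n. c * exp ((real (i + r i) + 1) ^ 2 * s / 2))) =
      (\<Sum>r | r permutes {..<n}. of_int (sign r) * (\<Prod>i<n. (c * \<alpha> i) * \<alpha> (r i) * (exp s ^ i) ^ r i))"
    by (simp only: factor)
  also have "\<dots> = (\<Prod>i<n. c * \<alpha> i) * (\<Prod>i<n. \<alpha> i) * (\<Prod>i<n. \<Prod>j\<in>{i<..<n}. (exp s ^ j - exp s ^ i))"
    by (rule sum_permutes_sign_scaled_vandermonde)
  also have "(\<Prod>i<n. c * \<alpha> i) * (\<Prod>i<n. \<alpha> i) = c ^ n * exp (s * (\<Sum>k<n. (real k + 1) ^ 2 - 1 / 2))"
  proof -
    have "\<alpha> k * \<alpha> k = exp (s * ((real k + 1) ^ 2 - 1 / 2))" for k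
      by (simp add: \<alpha>_def exp_add[symmetric])
    then show ?thesis
      by (simp add: prod.distrib exp_sum sum_distrib_left flip: prod.distrib[of \<alpha> \<alpha>])
  qed
  finally show ?thesis .
qed

lemma sum_shifted_squares_plus_squares:
  "(\<Sum>k<n. (real k + 1) ^ 2 - 1 / 2) + real (\<Sum>j<n. j ^ 2) = real n ^ 3 / 2 + (real n ^ 3 - real n) / 6"
  by (induction n) (simp_all add: power2_eq_square power3_eq_cube field_simps)

lemma indicator_pos_orthant:
  assumes "u \<in> space (PiM {..<n} (\<lambda>_. lborel))"
  shows "indicator (pos_orthant n) u = (\<Prod>i<n. indicator {0<..} (u i) :: real)"
proof (cases "\<forall>i<n. 0 < u i")
  case True
  then show ?thesis
    using assms by (simp add: pos_orthant_def indicator_def)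
next
  case False
  then obtain i where "i < n" "\<not> 0 < u i"
    by auto
  then show ?thesis
    using assms by (auto simp: pos_orthant_def indicator_def)
qed

theorem lognormal_vandermonde_sq_integral:
  fixes N :: nat and \<sigma> :: real
  assumes "\<sigma> > 0"
  shows "set_lebesgue_integral (PiM {..<N} (\<lambda>_. lborel)) (pos_orthant N)
      (\<lambda>u. (\<Prod>i<N. exp (- ((ln (u i)) ^ 2) / (2 * \<sigma> ^ 2))) * (abs (vandermonde N u)) ^ 2) =
    fact N * (2 * pi * \<sigma> ^ 2) powr (real N / 2)
    * exp (real N ^ 3 * \<sigma> ^ 2 / 2 + (real N ^ 3 - real N) * \<sigma> ^ 2 / 6)
    * (\<Prod>k\<in>{1..<N}. (1 - exp (- real k * \<sigma> ^ 2)) ^ (N - k))"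
proof -
  define s where "s = \<sigma> ^ 2"
  define c where "c = sqrt (2 * pi * s)"
  define w where "w t = indicator {0<..} t * exp (- (ln t ^ 2) / (2 * s))" for t :: real
  have moments: "has_bochner_integral lborel (\<lambda>t. w t * t ^ k) (c * exp ((real k + 1) ^ 2 * s / 2))" for k
    using has_bochner_integral_lognormal_moment[OF assms, of k] by (simp add: w_def c_def s_def)
  have "set_lebesgue_integral (PiM {..<N} (\<lambda>_. lborel)) (pos_orthant N)
      (\<lambda>u. (\<Prod>i<N. exp (- ((ln (u i)) ^ 2) / (2 * \<sigma> ^ 2))) * (abs (vandermonde N u)) ^ 2) =
    (\<integral>u. (\<Prod>i<N. w (u i)) * vandermonde N u ^ 2 \<partial>PiM {..<N} (\<lambda>_. lborel))"
    unfolding set_lebesgue_integral_def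
    by (intro Bochner_Integration.integral_cong refl) (simp add: indicator_pos_orthant w_def s_def prod.distrib)
  also have "\<dots> = fact N * (\<Sum>r | r permutes {..<N}.
      of_int (sign r) * (\<Prod>i<N. c * exp ((real (i + r i) + 1) ^ 2 * s / 2)))"
    by (rule has_bochner_integral_integral_eq[OF has_bochner_integral_prod_weight_vandermonde_sq[OF moments]])
  also have "\<dots> = fact N * (c ^ N * exp (s * (\<Sum>k<N. (real k + 1) ^ 2 - 1 / 2))
      * (\<Prod>i<N. \<Prod>j\<in>{i<..<N}. (exp s ^ j - exp s ^ i)))"
    by (simp only: sum_permutes_sign_lognormal_moments)
  also have "(\<Prod>i<N. \<Prod>j\<in>{i<..<N}. (exp s ^ j - exp s ^ i)) =
      exp s ^ (\<Sum>j<N. j ^ 2) * (\<Prod>k\<in>{1..<N}. (1 - exp (- real k * s)) ^ (N - k))"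
    by (subst prod_pairs_power_diff) (simp_all add: exp_minus power_inverse flip: exp_of_nat_mult)
  also have "fact N * (c ^ N * exp (s * (\<Sum>k<N. (real k + 1) ^ 2 - 1 / 2))
      * (exp s ^ (\<Sum>j<N. j ^ 2) * (\<Prod>k\<in>{1..<N}. (1 - exp (- real k * s)) ^ (N - k)))) =
    fact N * c ^ N * (exp (s * (\<Sum>k<N. (real k + 1) ^ 2 - 1 / 2)) * exp s ^ (\<Sum>j<N. j ^ 2))
      * (\<Prod>k\<in>{1..<N}. (1 - exp (- real k * s)) ^ (N - k))"
    by (simp only: ac_simps)
  also have "exp (s * (\<Sum>k<N. (real k + 1) ^ 2 - 1 / 2)) * exp s ^ (\<Sum>j<N. j ^ 2) =
      exp (real N ^ 3 * s / 2 + (real N ^ 3 - real N) * s / 6)"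
  proof -
    have "s * (\<Sum>k<N. (real k + 1) ^ 2 - 1 / 2) + real (\<Sum>j<N. j ^ 2) * s =
        real N ^ 3 * s / 2 + (real N ^ 3 - real N) * s / 6"
      using arg_cong[OF sum_shifted_squares_plus_squares[of N], of "\<lambda>x. s * x"] by (simp add: algebra_simps)
    then show ?thesis
      by (simp add: exp_add[symmetric] flip: exp_of_nat_mult)
  qed
  also have "c ^ N = (2 * pi * s) powr (real N / 2)"
    using assms by (simp add: c_def s_def powr_half_sqrt_powr powr_realpow real_sqrt_power)
  finally show ?thesis
    by (simp add: s_def)
qed

theorem proposition4:
  fixes N :: nat and \<sigma> \<omega> :: real
  assumes "N \<ge> 1" and "\<sigma> > 0" and "\<omega> > 0"
  shows "Z2 \<omega> N \<sigma> =
    \<omega> / 2 ^ (N^2) * (2 * pi * \<sigma>^2) powr (real N / 2)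
    * exp ((real N ^ 3 - real N) * \<sigma>^2 / 6)
    * (\<Prod>k\<in>{1..<N}. (1 - exp (- real k * \<sigma>^2)) ^ (N - k))"
proof -
  have cancel: "exp (- (real N ^ 3) * \<sigma>^2 / 2) * exp (real N ^ 3 * \<sigma>^2 / 2) = 1"
    by (simp flip: exp_add)
  have "Z2 \<omega> N \<sigma> = \<omega> / 2 ^ (N^2) * (2 * pi * \<sigma>^2) powr (real N / 2)
      * (exp (- (real N ^ 3) * \<sigma>^2 / 2) * exp (real N ^ 3 * \<sigma>^2 / 2))
      * exp ((real N ^ 3 - real N) * \<sigma>^2 / 6)
      * (\<Prod>k\<in>{1..<N}. (1 - exp (- real k * \<sigma>^2)) ^ (N - k))"
    unfolding Z2_def C_N2_def lognormal_vandermonde_sq_integral[OF assms(2)] exp_add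
    by (simp add: field_simps)
  then show ?thesis
    by (simp only: cancel mult_1_right)
qed

end
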